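(* For every unweighted congestion game $\mathcal{G}$ with cubic latency functions, $\mathrm{Apx}^1_\emptyset(\mathcal{G})\le\frac{17929}{34}\approx 527.323$.
   Context: A weighted congestion game consists of a finite set $[n]=\{1,\dots,n\}$ of players, a finite set $E$ of resources, for each player $i$ a weight $w_i>0$ and a nonempty finite strategy set $\Sigma_i\subseteq 2^E$, and for each resource $e$ a latency function $\ell_e:\mathbb{R}_{\ge 0}\to\mathbb{R}_{\ge 0}$. It is unweighted if $w_i=1$ for all $i$. Cubic latency functions means $\ell_e(x)=\sum_{j=0}^{3}\alpha_{e,j}x^j$ with all $\alpha_{e,j}\ge 0$. For a (possibly partial) profile in which each player in some subset $P\subseteq[n]$ has chosen a strategy $s_i$, the congestion of $e$ is $L_e=\sum_{i\in P:\,e\in s_i}w_i$ and the cost of a player $i\in P$ is $\sum_{e\in s_i}\ell_e(L_e)$. For a full profile $S$, $\mathrm{SUM}(S)=\sum_{i\in[n]}c_i(S)$ and $S^*$ minimizes $\mathrm{SUM}$. A one-round walk from the empty strategy profile: starting with no player having chosen a strategy, the players arrive one at a time in some order, and each arriving player selects a best response, i.e., a strategy in her strategy set minimizing her cost given the strategies already chosen by the previously arrived players (later players not yet present); the outcome is the full profile after all $n$ players have chosen. $\mathrm{Apx}^1_\emptyset(\mathcal{G})$ is the maximum, over all orderings of the players and all choices among best responses, of $\mathrm{SUM}(\text{outcome})/\mathrm{SUM}(S^* )$. *)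

theory Defs
  imports Main "HOL.Real"
begin

text \<open>A (possibly partial) profile is S :: nat => 'e set, only the values on the
  set of present players P matter.\<close>

definition cubic_lat :: "('e \<Rightarrow> nat \<Rightarrow> real) \<Rightarrow> 'e \<Rightarrow> real \<Rightarrow> real" where
  "cubic_lat \<alpha> e x = (\<Sum>j\<le>3. \<alpha> e j * x ^ j)"

definition load :: "nat set \<Rightarrow> (nat \<Rightarrow> 'e set) \<Rightarrow> 'e \<Rightarrow> real" where
  "load P S e = real (card {j \<in> P. e \<in> S j})"

definition pcost :: "('e \<Rightarrow> nat \<Rightarrow> real) \<Rightarrow> nat set \<Rightarrow> (nat \<Rightarrow> 'e set) \<Rightarrow> nat \<Rightarrow> real" where
  "pcost \<alpha> P S i = (\<Sum>e\<in>S i. cubic_lat \<alpha> e (load P S e))"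

definition SUMcost :: "('e \<Rightarrow> nat \<Rightarrow> real) \<Rightarrow> nat \<Rightarrow> (nat \<Rightarrow> 'e set) \<Rightarrow> real" where
  "SUMcost \<alpha> n S = (\<Sum>i<n. pcost \<alpha> {..<n} S i)"

definition valid_profile :: "nat \<Rightarrow> (nat \<Rightarrow> 'e set set) \<Rightarrow> (nat \<Rightarrow> 'e set) \<Rightarrow> bool" where
  "valid_profile n \<Sigma> S \<longleftrightarrow> (\<forall>i<n. S i \<in> \<Sigma> i)"

definition congestion_game :: "'e set \<Rightarrow> nat \<Rightarrow> (nat \<Rightarrow> 'e set set) \<Rightarrow> bool" where
  "congestion_game E n \<Sigma> \<longleftrightarrow> finite E \<and>
     (\<forall>i<n. finite (\<Sigma> i) \<and> \<Sigma> i \<noteq> {} \<and> \<Sigma> i \<subseteq> Pow E)"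

text \<open>S is the outcome of a one-round walk from the empty profile with arrival
  order \<pi> (\<pi> k is the (k+1)-th arriving player): every arriving player picks a
  best response against the previously arrived players only.\<close>
definition one_round_outcome ::
  "nat \<Rightarrow> (nat \<Rightarrow> 'e set set) \<Rightarrow> ('e \<Rightarrow> nat \<Rightarrow> real) \<Rightarrow> (nat \<Rightarrow> nat) \<Rightarrow> (nat \<Rightarrow> 'e set) \<Rightarrow> bool" where
  "one_round_outcome n \<Sigma> \<alpha> \<pi> S \<longleftrightarrow>
     bij_betw \<pi> {..<n} {..<n} \<and> valid_profile n \<Sigma> S \<and>
     (\<forall>k<n. \<forall>s\<in>\<Sigma> (\<pi> k).
        pcost \<alpha> (\<pi> ` {..k}) S (\<pi> k) \<le> pcost \<alpha> (\<pi> ` {..k}) (S(\<pi> k := s)) (\<pi> k))"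

end

theory Submission
  imports Defs Complex_Main
begin

(* Let L_e and K_e be the loads of resource e in the outcome S and in Sopt, and let
   Phi = sum_e (l_e(1) + ... + l_e(L_e)) be Rosenthal's potential of S.  When the players
   arrive one at a time, the cost of each arriving player is exactly the increase of the
   potential, and by the best-response property it is at most the cost of switching to her
   strategy in Sopt, where every load is at most L_e + 1; hence Phi <= sum_e K_e l_e(L_e + 1).
   For cubic latencies with nonnegative coefficients, monomial by monomial,
     L l(L) - 369/34 (l(1) + ... + l(L)) + 369/34 K l(L + 1) <= 17929/34 K l(K)
   for all natural numbers L and K; summing over the resources and adding 369/34 times the
   potential bound yields SUM(S) <= 17929/34 SUM(Sopt). *)

lemma weighted_am_gm_power:
  fixes x y :: "'a::linordered_idom"
  assumes "0 \<le> x" "0 \<le> y"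
  shows "of_nat (Suc n) * x * y ^ n \<le> x ^ Suc n + of_nat n * y ^ Suc n"
proof (induction n)
  case 0
  show ?case by simp
next
  case (Suc n)
  have "0 \<le> (x - y) * (x ^ Suc n - y ^ Suc n)"
  proof (cases "x \<le> y")
    case True
    then have "x ^ Suc n \<le> y ^ Suc n" using assms by (intro power_mono)
    with True show ?thesis by (simp add: mult_nonpos_nonpos)
  next
    case False
    then have "y ^ Suc n \<le> x ^ Suc n" using assms by (intro power_mono) auto
    with False show ?thesis by simp
  qed
  moreover have "0 \<le> y * (x ^ Suc n + of_nat n * y ^ Suc n - of_nat (Suc n) * x * y ^ n)"
    using Suc.IH assms by simp
  ultimately show ?case by (simp add: algebra_simps)
qed

lemma sum_Icc_power_1: "(\<Sum>t=1..L. real t) = (real L ^ 2 + real L) / 2"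
  by (induction L) (simp_all add: field_simps power2_eq_square)

lemma sum_Icc_power_2: "(\<Sum>t=1..L. real t ^ 2) = (2 * real L ^ 3 + 3 * real L ^ 2 + real L) / 6"
  by (induction L) (simp_all add: field_simps eval_nat_numeral)

lemma sum_Icc_power_3: "(\<Sum>t=1..L. real t ^ 3) = (real L ^ 4 + 2 * real L ^ 3 + real L ^ 2) / 4"
  by (induction L) (simp_all add: field_simps eval_nat_numeral)

lemma of_nat_le_power_self:
  assumes "0 < n"
  shows "(of_nat K :: 'a::linordered_semidom) \<le> of_nat K ^ n"
  using assms by (cases "K = 0") (simp_all add: self_le_power)

lemma monomial_bound_0:
  "real L ^ 1 - 369/34 * (\<Sum>t=1..L. real t ^ 0) + 369/34 * (real K * (real L + 1) ^ 0)
     \<le> 17929/34 * real K ^ 1"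
  by simp

lemma monomial_bound_1:
  "real L ^ 2 - 369/34 * (\<Sum>t=1..L. real t ^ 1) + 369/34 * (real K * (real L + 1) ^ 1)
     \<le> 17929/34 * real K ^ 2"
proof (cases "L = 0")
  case True
  have "real K \<le> real K ^ 2"
    by (rule of_nat_le_power_self) simp
  then have "369 * real K \<le> 17929 * real K ^ 2"
    using of_nat_0_le_iff[of K, where 'a = real] by argo
  with True show ?thesis by simp
next
  case False
  define x z where "x = real L" and "z = real K"
  have "1 \<le> x" using False by (simp add: x_def)
  have "2 * z * ((x + 1) / 4) \<le> z ^ 2 + ((x + 1) / 4) ^ 2"
    by (rule sum_squares_bound)
  then have "z * (x + 1) \<le> 2 * z ^ 2 + (x + 1) ^ 2 / 8"
    by (simp add: power_divide)
  moreover have "(x + 1) ^ 2 = x ^ 2 + 2 * x + 1"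
    by (simp add: power2_sum)
  ultimately show ?thesis
    unfolding x_def[symmetric] z_def[symmetric] power_one_right
    using sum_Icc_power_1[of L, folded x_def] \<open>1 \<le> x\<close> zero_le_power2[of x] zero_le_power2[of z]
    by argo
qed

lemma monomial_bound_2:
  "real L ^ 3 - 369/34 * (\<Sum>t=1..L. real t ^ 2) + 369/34 * (real K * (real L + 1) ^ 2)
     \<le> 17929/34 * real K ^ 3"
proof (cases "L = 0")
  case True
  have "real K \<le> real K ^ 3"
    by (rule of_nat_le_power_self) simp
  then have "369 * real K \<le> 17929 * real K ^ 3"
    using of_nat_0_le_iff[of K, where 'a = real] by argo
  with True show ?thesis by simp
next
  case False
  define x z where "x = real L" and "z = real K"
  have "1 \<le> x" "0 \<le> z" using False by (simp_all add: x_def z_def)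
  then have "3 * z * ((x + 1) / 10) ^ 2 \<le> z ^ 3 + 2 * ((x + 1) / 10) ^ 3"
    using weighted_am_gm_power[of z "(x + 1) / 10" 2] by (simp add: numeral_eq_Suc)
  then have "z * (x + 1) ^ 2 \<le> 100/3 * z ^ 3 + (x + 1) ^ 3 / 15"
    by (simp add: power_divide)
  moreover have "(x + 1) ^ 2 = x ^ 2 + 2 * x + 1" "(x + 1) ^ 3 = x ^ 3 + 3 * x ^ 2 + 3 * x + 1"
    by algebra+
  moreover have "x \<le> x ^ 2" "0 \<le> x ^ 3" "0 \<le> z ^ 3"
    using \<open>1 \<le> x\<close> \<open>0 \<le> z\<close> by (simp_all add: power2_eq_square)
  ultimately show ?thesis
    unfolding x_def[symmetric] z_def[symmetric]
    using sum_Icc_power_2[of L, folded x_def] \<open>1 \<le> x\<close> by argo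
qed

lemma monomial_bound_3:
  "real L ^ 4 - 369/34 * (\<Sum>t=1..L. real t ^ 3) + 369/34 * (real K * (real L + 1) ^ 3)
     \<le> 17929/34 * real K ^ 4"
proof -
  define x z where "x = real L" and "z = real K"
  have "0 \<le> x" "0 \<le> z" by (simp_all add: x_def z_def)
  have sum3: "(\<Sum>t=1..L. real t ^ 3) = (x ^ 4 + 2 * x ^ 3 + x ^ 2) / 4"
    using sum_Icc_power_3[of L] by (simp only: x_def)
  \<comment> \<open>Equality holds for L = 5, K = 1: for small L the integrality of K is essential.\<close>
  consider "6 \<le> L" | "L \<le> 5" "K = 1" | "L \<le> 5" "K = 0 \<or> 2 \<le> K"
    by linarith
  then show ?thesis
  proof cases
    case 1
    then have "6 \<le> x" by (simp add: x_def)
    have grow: "6 * x ^ k \<le> x ^ Suc k" for k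
      using mult_right_mono[OF \<open>6 \<le> x\<close>, of "x ^ k"] \<open>0 \<le> x\<close> by simp
    have "4 * z * (7/40 * (x + 1)) ^ 3 \<le> z ^ 4 + 3 * (7/40 * (x + 1)) ^ 4"
      using weighted_am_gm_power[of z "7/40 * (x + 1)" 3] \<open>0 \<le> x\<close> \<open>0 \<le> z\<close>
      by (simp add: numeral_eq_Suc)
    then have "z * (x + 1) ^ 3 \<le> 16000/343 * z ^ 4 + 21/160 * (x + 1) ^ 4"
      unfolding power_mult_distrib by (simp add: power_divide)
    moreover have "(x + 1) ^ 3 = x ^ 3 + 3 * x ^ 2 + 3 * x + 1"
      "(x + 1) ^ 4 = x ^ 4 + 4 * x ^ 3 + 6 * x ^ 2 + 4 * x + 1"
      by algebra+
    moreover have "6 * x ^ 3 \<le> x ^ 4" "6 * x ^ 2 \<le> x ^ 3" "6 * x \<le> x ^ 2"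
      using grow[of 3] grow[of 2] grow[of 1] by (simp_all add: power2_eq_square)
    moreover have "0 \<le> z ^ 4" by simp
    ultimately show ?thesis
      unfolding x_def[symmetric] z_def[symmetric] sum3 using \<open>6 \<le> x\<close> by argo
  next
    case 2
    then have "L \<in> {0, 1, 2, 3, 4, 5}" by auto
    with \<open>K = 1\<close> show ?thesis unfolding sum3 x_def by auto
  next
    case 3
    have "8 * z \<le> z ^ 4"
      using \<open>K = 0 \<or> 2 \<le> K\<close>
    proof
      assume "2 \<le> K"
      then have "2 ^ 3 \<le> z ^ 3" by (intro power_mono) (simp_all add: z_def)
      then show ?thesis using mult_left_mono[of "2 ^ 3" "z ^ 3" z] \<open>0 \<le> z\<close>
        by (simp add: power_Suc[symmetric] mult.commute)
    qed (simp add: z_def)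
    have "(x + 1) ^ 3 \<le> 6 ^ 3" using \<open>L \<le> 5\<close> by (intro power_mono) (simp_all add: x_def)
    then have "z * (x + 1) ^ 3 \<le> 216 * z"
      using \<open>0 \<le> z\<close> by (simp add: mult_left_mono mult.commute)
    moreover have "0 \<le> x ^ 2" "0 \<le> x ^ 3" "0 \<le> x ^ 4" by (simp_all add: \<open>0 \<le> x\<close>)
    ultimately show ?thesis
      unfolding x_def[symmetric] z_def[symmetric] sum3
      using \<open>8 * z \<le> z ^ 4\<close> \<open>0 \<le> z\<close> by argo
  qed
qed

lemma monomial_bound:
  assumes "j \<le> 3"
  shows "real L ^ (j + 1) - 369/34 * (\<Sum>t=1..L. real t ^ j) + 369/34 * (real K * (real L + 1) ^ j)
           \<le> 17929/34 * real K ^ (j + 1)"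
proof -
  consider "j = 0" | "j = 1" | "j = 2" | "j = 3" using assms by linarith
  then show ?thesis
    using monomial_bound_0 monomial_bound_1 monomial_bound_2 monomial_bound_3
    by cases (simp_all add: power2_eq_square)
qed

definition rosenthal_potential :: "('e \<Rightarrow> nat \<Rightarrow> real) \<Rightarrow> 'e \<Rightarrow> nat \<Rightarrow> real" where
  "rosenthal_potential \<alpha> e m = (\<Sum>t=1..m. cubic_lat \<alpha> e (real t))"

lemma cubic_lat_smoothness:
  assumes "\<And>j. j \<le> 3 \<Longrightarrow> 0 \<le> \<alpha> e j"
  shows "real L * cubic_lat \<alpha> e (real L) - 369/34 * rosenthal_potential \<alpha> e L
           + 369/34 * (real K * cubic_lat \<alpha> e (real L + 1))
         \<le> 17929/34 * (real K * cubic_lat \<alpha> e (real K))"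
proof -
  have potential: "rosenthal_potential \<alpha> e L = (\<Sum>j\<le>3. \<alpha> e j * (\<Sum>t=1..L. real t ^ j))"
    unfolding rosenthal_potential_def cubic_lat_def sum_distrib_left by (rule sum.swap)
  have "real L * cubic_lat \<alpha> e (real L) - 369/34 * rosenthal_potential \<alpha> e L
          + 369/34 * (real K * cubic_lat \<alpha> e (real L + 1))
          - 17929/34 * (real K * cubic_lat \<alpha> e (real K))
        = (\<Sum>j\<le>3. \<alpha> e j * (real L ^ (j + 1) - 369/34 * (\<Sum>t=1..L. real t ^ j)
            + 369/34 * (real K * (real L + 1) ^ j) - 17929/34 * real K ^ (j + 1)))"
    unfolding potential cubic_lat_def
    by (simp add: sum_distrib_left sum_distrib_right sum_divide_distrib sum_subtractf sum.distrib
        algebra_simps)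
  also have "\<dots> \<le> 0"
    using assms monomial_bound by (intro sum_nonpos mult_nonneg_nonpos) auto
  finally show ?thesis by simp
qed

definition users :: "nat set \<Rightarrow> (nat \<Rightarrow> 'e set) \<Rightarrow> 'e \<Rightarrow> nat set" where
  "users P S e = {j \<in> P. e \<in> S j}"

lemma load_eq_card_users: "load P S e = real (card (users P S e))"
  by (simp add: load_def users_def)

lemma finite_users [simp]: "finite P \<Longrightarrow> finite (users P S e)"
  by (simp add: users_def)

lemma cubic_lat_mono:
  assumes "\<And>j. j \<le> 3 \<Longrightarrow> 0 \<le> \<alpha> e j" and "0 \<le> x" and "x \<le> y"
  shows "cubic_lat \<alpha> e x \<le> cubic_lat \<alpha> e y"
  unfolding cubic_lat_def using assms by (intro sum_mono mult_left_mono power_mono) auto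

lemma sum_sum_eq_sum_card_users:
  fixes f :: "'e \<Rightarrow> 'a::comm_semiring_1"
  assumes "finite E" and "finite I" and "\<And>i. i \<in> I \<Longrightarrow> T i \<subseteq> E"
  shows "(\<Sum>i\<in>I. \<Sum>e\<in>T i. f e) = (\<Sum>e\<in>E. of_nat (card (users I T e)) * f e)"
proof -
  have "(\<Sum>i\<in>I. \<Sum>e\<in>T i. f e) = (\<Sum>i\<in>I. \<Sum>e\<in>{e \<in> E. e \<in> T i}. f e)"
    using assms(3) by (intro sum.cong) auto
  also have "\<dots> = (\<Sum>e\<in>E. \<Sum>i\<in>users I T e. f e)"
    unfolding users_def by (rule sum.swap_restrict[OF assms(2,1)])
  finally show ?thesis by simp
qed

lemma SUMcost_eq_sum_resources:
  assumes "finite E" and "\<And>i. i < n \<Longrightarrow> T i \<subseteq> E"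
  shows "SUMcost \<alpha> n T = (\<Sum>e\<in>E. load {..<n} T e * cubic_lat \<alpha> e (load {..<n} T e))"
  unfolding SUMcost_def pcost_def load_eq_card_users
  using assms by (intro sum_sum_eq_sum_card_users) auto

lemma rosenthal_potential_Suc:
  "rosenthal_potential \<alpha> e (Suc m) = rosenthal_potential \<alpha> e m + cubic_lat \<alpha> e (real (Suc m))"
  by (simp add: rosenthal_potential_def)

lemma users_insert:
  "users (insert i P) S e = (if e \<in> S i then insert i (users P S e) else users P S e)"
  by (auto simp: users_def)

lemma sum_rosenthal_potential_insert:
  assumes "finite E" and "finite P" and "i \<notin> P" and "S i \<subseteq> E"
  shows "(\<Sum>e\<in>E. rosenthal_potential \<alpha> e (card (users (insert i P) S e)))
           = (\<Sum>e\<in>E. rosenthal_potential \<alpha> e (card (users P S e))) + pcost \<alpha> (insert i P) S i"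
proof -
  have "i \<notin> users P S e" for e using \<open>i \<notin> P\<close> by (simp add: users_def)
  then have card: "card (users (insert i P) S e)
      = (if e \<in> S i then Suc (card (users P S e)) else card (users P S e))" for e
    using \<open>finite P\<close> by (simp add: users_insert)
  have "(\<Sum>e\<in>E. rosenthal_potential \<alpha> e (card (users (insert i P) S e))
                  - rosenthal_potential \<alpha> e (card (users P S e)))
        = (\<Sum>e\<in>E. if e \<in> S i then cubic_lat \<alpha> e (load (insert i P) S e) else 0)"
    by (intro sum.cong) (simp_all add: card rosenthal_potential_Suc load_eq_card_users)
  also have "\<dots> = pcost \<alpha> (insert i P) S i"
    using assms by (simp add: sum.inter_restrict[symmetric] pcost_def Int_absorb1)
  finally show ?thesis by (simp add: sum_subtractf)
qed

lemma sum_arrival_costs_eq_potential: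
  fixes m :: nat
  assumes "finite E" and "inj_on \<pi> {..<m}" and "\<And>k. k < m \<Longrightarrow> S (\<pi> k) \<subseteq> E"
  shows "(\<Sum>k<m. pcost \<alpha> (\<pi> ` {..k}) S (\<pi> k))
           = (\<Sum>e\<in>E. rosenthal_potential \<alpha> e (card (users (\<pi> ` {..<m}) S e)))"
  using assms(2,3)
proof (induction m)
  case 0
  show ?case by (simp add: users_def rosenthal_potential_def)
next
  case (Suc m)
  have "\<pi> m \<notin> \<pi> ` {..<m}" using Suc.prems(1) by (simp add: lessThan_Suc)
  moreover have "\<pi> ` {..<Suc m} = insert (\<pi> m) (\<pi> ` {..<m})" "{..m} = {..<Suc m}"
    by (auto simp: lessThan_Suc)
  moreover have "inj_on \<pi> {..<m}" using Suc.prems(1) by (rule inj_on_subset) auto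
  ultimately show ?case
    using Suc.IH Suc.prems(2) sum_rosenthal_potential_insert[OF \<open>finite E\<close>] by simp
qed

lemma pcost_deviation_le:
  assumes "P \<subseteq> Q" and "finite Q" and "\<And>e j. e \<in> s \<Longrightarrow> j \<le> 3 \<Longrightarrow> 0 \<le> \<alpha> e j"
  shows "pcost \<alpha> P (S(i := s)) i \<le> (\<Sum>e\<in>s. cubic_lat \<alpha> e (load Q S e + 1))"
  unfolding pcost_def fun_upd_same
proof (rule sum_mono)
  fix e assume "e \<in> s"
  have "users P (S(i := s)) e \<subseteq> insert i (users Q S e)"
    using \<open>P \<subseteq> Q\<close> by (auto simp: users_def)
  then have "card (users P (S(i := s)) e) \<le> card (insert i (users Q S e))"
    using \<open>finite Q\<close> by (intro card_mono) simp_all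
  also have "\<dots> \<le> Suc (card (users Q S e))"
    using \<open>finite Q\<close> by (simp add: card_insert_if)
  finally have "load P (S(i := s)) e \<le> load Q S e + 1"
    by (simp add: load_eq_card_users)
  then show "cubic_lat \<alpha> e (load P (S(i := s)) e) \<le> cubic_lat \<alpha> e (load Q S e + 1)"
    using assms(3)[OF \<open>e \<in> s\<close>] by (intro cubic_lat_mono) (simp_all add: load_def)
qed

lemma one_round_potential_le:
  assumes "congestion_game E n \<Sigma>"
    and "\<And>e j. e \<in> E \<Longrightarrow> j \<le> 3 \<Longrightarrow> 0 \<le> \<alpha> e j"
    and "one_round_outcome n \<Sigma> \<alpha> \<pi> S"
    and "valid_profile n \<Sigma> Sopt"
  shows "(\<Sum>e\<in>E. rosenthal_potential \<alpha> e (card (users {..<n} S e)))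
           \<le> (\<Sum>e\<in>E. load {..<n} Sopt e * cubic_lat \<alpha> e (load {..<n} S e + 1))"
proof -
  have "finite E" and strategies: "\<And>i. i < n \<Longrightarrow> S i \<subseteq> E \<and> Sopt i \<subseteq> E"
    and bij: "bij_betw \<pi> {..<n} {..<n}"
    using assms(1,3,4) by (auto simp: congestion_game_def one_round_outcome_def valid_profile_def)
  have arrival_lt: "\<pi> k < n" if "k < n" for k
    using that bij_betw_apply[OF bij] by simp
  then have arrivals: "\<pi> ` {..k} \<subseteq> {..<n}" if "k < n" for k
    using that by fastforce
  have "S (\<pi> k) \<subseteq> E" if "k < n" for k
    using that strategies arrival_lt by blast
  then have "(\<Sum>e\<in>E. rosenthal_potential \<alpha> e (card (users {..<n} S e)))
        = (\<Sum>k<n. pcost \<alpha> (\<pi> ` {..k}) S (\<pi> k))"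
    using sum_arrival_costs_eq_potential[OF \<open>finite E\<close> bij_betw_imp_inj_on[OF bij]]
      bij_betw_imp_surj_on[OF bij] by simp
  also have "\<dots> \<le> (\<Sum>k<n. pcost \<alpha> (\<pi> ` {..k}) (S(\<pi> k := Sopt (\<pi> k))) (\<pi> k))"
    using assms(3,4) bij
    by (intro sum_mono) (auto simp: one_round_outcome_def valid_profile_def dest: bij_betw_apply)
  also have "\<dots> \<le> (\<Sum>k<n. \<Sum>e\<in>Sopt (\<pi> k). cubic_lat \<alpha> e (load {..<n} S e + 1))"
    using arrivals strategies arrival_lt assms(2) by (intro sum_mono pcost_deviation_le) blast+
  also have "\<dots> = (\<Sum>i<n. \<Sum>e\<in>Sopt i. cubic_lat \<alpha> e (load {..<n} S e + 1))"
    using bij by (rule sum.reindex_bij_betw)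
  also have "\<dots> = (\<Sum>e\<in>E. load {..<n} Sopt e * cubic_lat \<alpha> e (load {..<n} S e + 1))"
    unfolding load_eq_card_users using \<open>finite E\<close> strategies
    by (intro sum_sum_eq_sum_card_users) auto
  finally show ?thesis .
qed

theorem mainTheorem12:
  fixes E :: "'e set" and n :: nat and \<Sigma> :: "nat \<Rightarrow> 'e set set"
    and \<alpha> :: "'e \<Rightarrow> nat \<Rightarrow> real" and \<pi> :: "nat \<Rightarrow> nat"
    and S Sopt :: "nat \<Rightarrow> 'e set"
  assumes "congestion_game E n \<Sigma>"
    and "\<And>e j. e \<in> E \<Longrightarrow> j \<le> 3 \<Longrightarrow> \<alpha> e j \<ge> 0"
    and "one_round_outcome n \<Sigma> \<alpha> \<pi> S"
    and "valid_profile n \<Sigma> Sopt"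
  shows "SUMcost \<alpha> n S \<le> (17929 / 34) * SUMcost \<alpha> n Sopt"
proof -
  have "finite E" and "\<And>i. i < n \<Longrightarrow> S i \<subseteq> E" and "\<And>i. i < n \<Longrightarrow> Sopt i \<subseteq> E"
    using assms(1,3,4) by (auto simp: congestion_game_def one_round_outcome_def valid_profile_def)
  define L K where "L e = card (users {..<n} S e)" and "K e = card (users {..<n} Sopt e)" for e
  have cost: "SUMcost \<alpha> n S = (\<Sum>e\<in>E. real (L e) * cubic_lat \<alpha> e (real (L e)))"
    and cost_opt: "SUMcost \<alpha> n Sopt = (\<Sum>e\<in>E. real (K e) * cubic_lat \<alpha> e (real (K e)))"
    using SUMcost_eq_sum_resources[OF \<open>finite E\<close>] \<open>\<And>i. i < n \<Longrightarrow> S i \<subseteq> E\<close>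
      \<open>\<And>i. i < n \<Longrightarrow> Sopt i \<subseteq> E\<close>
    by (simp_all add: L_def K_def load_eq_card_users)
  have potential: "(\<Sum>e\<in>E. rosenthal_potential \<alpha> e (L e))
      \<le> (\<Sum>e\<in>E. real (K e) * cubic_lat \<alpha> e (real (L e) + 1))"
    using one_round_potential_le[OF assms] by (simp add: L_def K_def load_eq_card_users)
  have "(\<Sum>e\<in>E. real (L e) * cubic_lat \<alpha> e (real (L e)) - 369/34 * rosenthal_potential \<alpha> e (L e)
          + 369/34 * (real (K e) * cubic_lat \<alpha> e (real (L e) + 1)))
        \<le> (\<Sum>e\<in>E. 17929/34 * (real (K e) * cubic_lat \<alpha> e (real (K e))))"
    using assms(2) by (intro sum_mono cubic_lat_smoothness) auto
  then have "SUMcost \<alpha> n S - 369/34 * (\<Sum>e\<in>E. rosenthal_potential \<alpha> e (L e))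
      + 369/34 * (\<Sum>e\<in>E. real (K e) * cubic_lat \<alpha> e (real (L e) + 1))
      \<le> 17929/34 * SUMcost \<alpha> n Sopt"
    unfolding cost cost_opt by (simp only: sum.distrib sum_subtractf sum_distrib_left)
  with potential show ?thesis by argo
qed

end
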